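(* Let $A$ and $B$ be rings, $f: A\to B$ a ring homomorphism and $J$ a proper ideal of $B$. Let $S$ be the set of regular central elements of $B$ (central elements that are not zero divisors), and assume $J\cap S\neq\varnothing$. Then $A\bowtie^{f}J$ is an Armendariz ring if and only if both $A$ and $f(A)+J$ are Armendariz rings.
   Context: All rings are associative with identity (not necessarily commutative), ring homomorphisms are unital, and ideals are two-sided. For a ring homomorphism $f:A\to B$ and an ideal $J$ of $B$, the amalgamation is the subring $A\bowtie^{f}J=\{(a,f(a)+j)\mid a\in A,\ j\in J\}$ of $A\times B$; $f(A)+J=\{f(a)+j: a\in A, j\in J\}$ is a subring of $B$. A ring $R$ is Armendariz if whenever $p(x)=\sum_{i=0}^n a_ix^i$ and $q(x)=\sum_{j=0}^m b_jx^j$ in $R[x]$ satisfy $p(x)q(x)=0$, then $a_ib_j=0$ for all $i,j$. *)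

theory Defs
  imports "HOL-Algebra.Algebra"
begin

definition armendariz :: "('a, 'm) ring_scheme \<Rightarrow> bool" where
  "armendariz R \<longleftrightarrow>
     (\<forall>p \<in> carrier (UP R). \<forall>q \<in> carrier (UP R).
        p \<otimes>\<^bsub>UP R\<^esub> q = \<zero>\<^bsub>UP R\<^esub> \<longrightarrow>
        (\<forall>i j. coeff (UP R) p i \<otimes>\<^bsub>R\<^esub> coeff (UP R) q j = \<zero>\<^bsub>R\<^esub>))"

definition amalgamation ::
  "('a, 'm) ring_scheme \<Rightarrow> ('b, 'n) ring_scheme \<Rightarrow> ('a \<Rightarrow> 'b) \<Rightarrow> 'b set \<Rightarrow> ('a \<times> 'b) ring" where
  "amalgamation A B f J =
     (RDirProd A B)\<lparr>carrier := {(a, f a \<oplus>\<^bsub>B\<^esub> j) | a j. a \<in> carrier A \<and> j \<in> J}\<rparr>"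

definition image_plus_ideal ::
  "('a, 'm) ring_scheme \<Rightarrow> ('b, 'n) ring_scheme \<Rightarrow> ('a \<Rightarrow> 'b) \<Rightarrow> 'b set \<Rightarrow> ('b, 'n) ring_scheme" where
  "image_plus_ideal A B f J =
     B\<lparr>carrier := {f a \<oplus>\<^bsub>B\<^esub> j | a j. a \<in> carrier A \<and> j \<in> J}\<rparr>"

definition regular_central :: "('b, 'n) ring_scheme \<Rightarrow> 'b set" where
  "regular_central B =
     {s \<in> carrier B. (\<forall>x \<in> carrier B. s \<otimes>\<^bsub>B\<^esub> x = x \<otimes>\<^bsub>B\<^esub> s) \<and>
        (\<forall>x \<in> carrier B. s \<otimes>\<^bsub>B\<^esub> x = \<zero>\<^bsub>B\<^esub> \<longrightarrow> x = \<zero>\<^bsub>B\<^esub>) \<and>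
        (\<forall>x \<in> carrier B. x \<otimes>\<^bsub>B\<^esub> s = \<zero>\<^bsub>B\<^esub> \<longrightarrow> x = \<zero>\<^bsub>B\<^esub>)}"

end

theory Submission
  imports Defs
begin

text \<open>Write \<open>C = A \<bowtie>\<^sup>f J\<close> and \<open>D = f(A) + J\<close>. The projections \<open>C \<rightarrow> A\<close> and \<open>C \<rightarrow> D\<close> are ring
  homomorphisms with trivial joint kernel, so a polynomial relation \<open>p q = 0\<close> over \<open>C\<close> maps to
  relations over \<open>A\<close> and \<open>D\<close>; if both are Armendariz, every coefficient product vanishes in both
  components. Conversely, \<open>a \<mapsto> (a, f a)\<close> embeds \<open>A\<close> into \<open>C\<close>, and a regular central
  \<open>s \<in> J\<close> gives the map \<open>x \<mapsto> (0, s x)\<close> from \<open>D\<close> into \<open>C\<close>; it is not multiplicative, but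
  products of images are images of products under the injective additive map \<open>x \<mapsto> (0, s\<^sup>2 x)\<close>,
  which is enough to pull the Armendariz property back.\<close>

lemma amalgamation_simps:
  "carrier (amalgamation A B f J) = {(a, f a \<oplus>\<^bsub>B\<^esub> j) | a j. a \<in> carrier A \<and> j \<in> J}"
  "x \<otimes>\<^bsub>amalgamation A B f J\<^esub> y = (fst x \<otimes>\<^bsub>A\<^esub> fst y, snd x \<otimes>\<^bsub>B\<^esub> snd y)"
  "x \<oplus>\<^bsub>amalgamation A B f J\<^esub> y = (fst x \<oplus>\<^bsub>A\<^esub> fst y, snd x \<oplus>\<^bsub>B\<^esub> snd y)"
  "\<zero>\<^bsub>amalgamation A B f J\<^esub> = (\<zero>\<^bsub>A\<^esub>, \<zero>\<^bsub>B\<^esub>)"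
  "\<one>\<^bsub>amalgamation A B f J\<^esub> = (\<one>\<^bsub>A\<^esub>, \<one>\<^bsub>B\<^esub>)"
  by (auto simp: amalgamation_def RDirProd_def DirProd_def monoid.defs case_prod_beta)

lemma image_plus_ideal_simps:
  "carrier (image_plus_ideal A B f J) = {f a \<oplus>\<^bsub>B\<^esub> j | a j. a \<in> carrier A \<and> j \<in> J}"
  "x \<otimes>\<^bsub>image_plus_ideal A B f J\<^esub> y = x \<otimes>\<^bsub>B\<^esub> y"
  "x \<oplus>\<^bsub>image_plus_ideal A B f J\<^esub> y = x \<oplus>\<^bsub>B\<^esub> y"
  "\<zero>\<^bsub>image_plus_ideal A B f J\<^esub> = \<zero>\<^bsub>B\<^esub>"
  "\<one>\<^bsub>image_plus_ideal A B f J\<^esub> = \<one>\<^bsub>B\<^esub>"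
  by (auto simp: image_plus_ideal_def)

lemma image_plus_ideal_eq_snd_image:
  "image_plus_ideal A B f J = B\<lparr>carrier := snd ` carrier (amalgamation A B f J)\<rparr>"
proof -
  have "{f a \<oplus>\<^bsub>B\<^esub> j | a j. a \<in> carrier A \<and> j \<in> J} = snd ` carrier (amalgamation A B f J)"
    by (force simp: amalgamation_simps)
  then show ?thesis by (simp add: image_plus_ideal_def)
qed

lemma amalgamation_subring:
  assumes A: "ring A" and B: "ring B" and f: "f \<in> ring_hom A B" and J: "ideal J B"
  shows "subring (carrier (amalgamation A B f J)) (RDirProd A B)"
proof -
  interpret A: ring A by fact
  interpret B: ring B by fact
  interpret J: ideal J B by fact
  interpret P: ring "RDirProd A B" using RDirProd_ring A B .
  interpret f: ring_hom_ring A B f using A B f by (rule ring_hom_ringI2)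
  note P_ops = RDirProd_def DirProd_def monoid.defs
  have neg: "\<ominus>\<^bsub>RDirProd A B\<^esub> (x, y) = (\<ominus>\<^bsub>A\<^esub> x, \<ominus>\<^bsub>B\<^esub> y)"
    if "x \<in> carrier A" "y \<in> carrier B" for x y
    using that by (intro P.minus_equality) (auto simp: P_ops RDirProd_carrier A.l_neg B.l_neg)
  show ?thesis unfolding amalgamation_simps
  proof (rule P.subringI)
    show "{(a, f a \<oplus>\<^bsub>B\<^esub> j) | a j. a \<in> carrier A \<and> j \<in> J} \<subseteq> carrier (RDirProd A B)"
      using J.Icarr by (auto simp: RDirProd_carrier)
    have "\<one>\<^bsub>RDirProd A B\<^esub> = (\<one>\<^bsub>A\<^esub>, f \<one>\<^bsub>A\<^esub> \<oplus>\<^bsub>B\<^esub> \<zero>\<^bsub>B\<^esub>)"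
      by (simp add: P_ops)
    then show "\<one>\<^bsub>RDirProd A B\<^esub> \<in> {(a, f a \<oplus>\<^bsub>B\<^esub> j) | a j. a \<in> carrier A \<and> j \<in> J}"
      using J.zero_closed by blast
  next
    fix h assume "h \<in> {(a, f a \<oplus>\<^bsub>B\<^esub> j) | a j. a \<in> carrier A \<and> j \<in> J}"
    then obtain a j where h: "h = (a, f a \<oplus>\<^bsub>B\<^esub> j)" "a \<in> carrier A" "j \<in> J" by blast
    then have "\<ominus>\<^bsub>RDirProd A B\<^esub> h = (\<ominus>\<^bsub>A\<^esub> a, f (\<ominus>\<^bsub>A\<^esub> a) \<oplus>\<^bsub>B\<^esub> \<ominus>\<^bsub>B\<^esub> j)"
      using J.Icarr neg by (simp add: B.minus_add)
    then show "\<ominus>\<^bsub>RDirProd A B\<^esub> h \<in> {(a, f a \<oplus>\<^bsub>B\<^esub> j) | a j. a \<in> carrier A \<and> j \<in> J}"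
      using h J.a_inv_closed by blast
  next
    fix h1 h2
    assume "h1 \<in> {(a, f a \<oplus>\<^bsub>B\<^esub> j) | a j. a \<in> carrier A \<and> j \<in> J}"
      and "h2 \<in> {(a, f a \<oplus>\<^bsub>B\<^esub> j) | a j. a \<in> carrier A \<and> j \<in> J}"
    then obtain a j a' j' where h: "h1 = (a, f a \<oplus>\<^bsub>B\<^esub> j)" "a \<in> carrier A" "j \<in> J"
      and h': "h2 = (a', f a' \<oplus>\<^bsub>B\<^esub> j')" "a' \<in> carrier A" "j' \<in> J" by blast
    have jc: "j \<in> carrier B" "j' \<in> carrier B" using h h' J.Icarr by blast+
    let ?k = "f a \<otimes>\<^bsub>B\<^esub> j' \<oplus>\<^bsub>B\<^esub> (j \<otimes>\<^bsub>B\<^esub> f a' \<oplus>\<^bsub>B\<^esub> j \<otimes>\<^bsub>B\<^esub> j')"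
    have "?k \<in> J" using h h' jc by (simp add: J.I_l_closed J.I_r_closed J.a_closed)
    moreover have "h1 \<otimes>\<^bsub>RDirProd A B\<^esub> h2 = (a \<otimes>\<^bsub>A\<^esub> a', f (a \<otimes>\<^bsub>A\<^esub> a') \<oplus>\<^bsub>B\<^esub> ?k)"
      using h h' jc by (simp add: P_ops B.l_distr B.r_distr B.a_assoc B.a_lcomm)
    ultimately show "h1 \<otimes>\<^bsub>RDirProd A B\<^esub> h2 \<in> {(a, f a \<oplus>\<^bsub>B\<^esub> j) | a j. a \<in> carrier A \<and> j \<in> J}"
      using h h' by blast
    have "h1 \<oplus>\<^bsub>RDirProd A B\<^esub> h2 = (a \<oplus>\<^bsub>A\<^esub> a', f (a \<oplus>\<^bsub>A\<^esub> a') \<oplus>\<^bsub>B\<^esub> (j \<oplus>\<^bsub>B\<^esub> j'))"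
      using h h' jc by (simp add: P_ops B.a_ac)
    then show "h1 \<oplus>\<^bsub>RDirProd A B\<^esub> h2 \<in> {(a, f a \<oplus>\<^bsub>B\<^esub> j) | a j. a \<in> carrier A \<and> j \<in> J}"
      using h h' J.a_closed by blast
  qed
qed

lemma ring_amalgamation:
  assumes "ring A" and "ring B" and "f \<in> ring_hom A B" and "ideal J B"
  shows "ring (amalgamation A B f J)"
  using ring.subring_is_ring[OF RDirProd_ring amalgamation_subring[OF assms]] assms
  by (simp add: amalgamation_def)

lemma RDirProd_snd_hom: "snd \<in> ring_hom (RDirProd R S) S"
  by (auto simp: ring_hom_def RDirProd_def DirProd_def monoid.defs)

lemma ring_image_plus_ideal:
  assumes "ring A" and "ring B" and "f \<in> ring_hom A B" and "ideal J B"
  shows "ring (image_plus_ideal A B f J)"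
proof -
  have "ring_hom_ring (RDirProd A B) B snd"
    using assms RDirProd_ring RDirProd_snd_hom by (blast intro: ring_hom_ringI2)
  then have "subring (snd ` carrier (amalgamation A B f J)) B"
    using amalgamation_subring[OF assms] by (rule ring_hom_ring.img_is_subring)
  then show ?thesis
    unfolding image_plus_ideal_eq_snd_image by (rule ring.subring_is_ring[OF assms(2)])
qed

lemma amalgamation_fst_hom:
  "fst \<in> ring_hom (amalgamation A B f J) A"
  by (rule ring_hom_memI) (auto simp: amalgamation_simps)

lemma amalgamation_snd_hom:
  "snd \<in> ring_hom (amalgamation A B f J) (image_plus_ideal A B f J)"
  by (rule ring_hom_memI) (auto simp: amalgamation_simps image_plus_ideal_simps, blast)

lemma amalgamation_graph_hom:
  assumes "ring B" and "f \<in> ring_hom A B" and "ideal J B"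
  shows "(\<lambda>a. (a, f a)) \<in> ring_hom A (amalgamation A B f J)"
proof -
  interpret B: ring B by fact
  interpret J: ideal J B by fact
  have "(a, f a \<oplus>\<^bsub>B\<^esub> \<zero>\<^bsub>B\<^esub>) \<in> carrier (amalgamation A B f J)" if "a \<in> carrier A" for a
    using that J.zero_closed by (auto simp: amalgamation_simps)
  then show ?thesis
    using assms(2) by (intro ring_hom_memI)
      (simp_all add: amalgamation_simps ring_hom_closed ring_hom_mult ring_hom_add ring_hom_one)
qed

lemma UP_simps:
  "carrier (UP R) = up R"
  "\<zero>\<^bsub>UP R\<^esub> = (\<lambda>i. \<zero>\<^bsub>R\<^esub>)"
  "p \<in> up R \<Longrightarrow> coeff (UP R) p n = p n"
  "p \<in> up R \<Longrightarrow> q \<in> up R \<Longrightarrow> p \<otimes>\<^bsub>UP R\<^esub> q = (\<lambda>n. \<Oplus>\<^bsub>R\<^esub>i \<in> {..n}. p i \<otimes>\<^bsub>R\<^esub> q (n - i))"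
  by (simp_all add: UP_def)

lemma up_comp:
  assumes "p \<in> up R" and "h \<in> carrier R \<rightarrow> carrier S" and "h \<zero>\<^bsub>R\<^esub> = \<zero>\<^bsub>S\<^esub>"
  shows "(\<lambda>n. h (p n)) \<in> up S"
proof -
  obtain n where "\<And>i. p i \<in> carrier R" and "bound \<zero>\<^bsub>R\<^esub> n p"
    using assms(1) unfolding up_def by auto
  moreover from this have "bound \<zero>\<^bsub>S\<^esub> n (\<lambda>n. h (p n))"
    using assms(3) by (auto simp: bound_def)
  ultimately show ?thesis
    using assms(2) unfolding up_def by auto
qed

lemma finsum_additive:
  assumes R: "ring R" and S: "ring S" and g: "g \<in> carrier R \<rightarrow> carrier S"
    and g_add: "\<And>x y. x \<in> carrier R \<Longrightarrow> y \<in> carrier R \<Longrightarrow> g (x \<oplus>\<^bsub>R\<^esub> y) = g x \<oplus>\<^bsub>S\<^esub> g y"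
    and g_zero: "g \<zero>\<^bsub>R\<^esub> = \<zero>\<^bsub>S\<^esub>"
    and "finite I" and "F \<in> I \<rightarrow> carrier R"
  shows "g (finsum R F I) = finsum S (\<lambda>i. g (F i)) I"
proof -
  interpret R: ring R by fact
  interpret S: ring S by fact
  show ?thesis
    using \<open>finite I\<close> \<open>F \<in> I \<rightarrow> carrier R\<close>
  proof (induction I rule: finite_induct)
    case empty
    then show ?case using g_zero by simp
  next
    case (insert x I)
    have F: "F \<in> I \<rightarrow> carrier R" "F x \<in> carrier R" using insert.prems by auto
    have "g (finsum R F (insert x I)) = g (F x) \<oplus>\<^bsub>S\<^esub> g (finsum R F I)"
      using R.finsum_insert[OF insert.hyps F] g_add F R.finsum_closed by simp
    also have "\<dots> = finsum S (\<lambda>i. g (F i)) (insert x I)"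
      using insert.IH[OF F(1)] S.finsum_insert[OF insert.hyps, of "\<lambda>i. g (F i)"] F g
      by (simp add: Pi_iff)
    finally show ?case .
  qed
qed

lemma UP_mult_comp:
  assumes R: "ring R" and S: "ring S"
    and h: "h \<in> carrier R \<rightarrow> carrier S" and h_zero: "h \<zero>\<^bsub>R\<^esub> = \<zero>\<^bsub>S\<^esub>"
    and g: "g \<in> carrier R \<rightarrow> carrier S"
    and g_add: "\<And>x y. x \<in> carrier R \<Longrightarrow> y \<in> carrier R \<Longrightarrow> g (x \<oplus>\<^bsub>R\<^esub> y) = g x \<oplus>\<^bsub>S\<^esub> g y"
    and g_zero: "g \<zero>\<^bsub>R\<^esub> = \<zero>\<^bsub>S\<^esub>"
    and hg: "\<And>x y. x \<in> carrier R \<Longrightarrow> y \<in> carrier R \<Longrightarrow> h x \<otimes>\<^bsub>S\<^esub> h y = g (x \<otimes>\<^bsub>R\<^esub> y)"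
    and p: "p \<in> up R" and q: "q \<in> up R"
  shows "(\<lambda>n. h (p n)) \<otimes>\<^bsub>UP S\<^esub> (\<lambda>n. h (q n)) = (\<lambda>n. g ((p \<otimes>\<^bsub>UP R\<^esub> q) n))"
proof
  fix n
  interpret R: ring R by fact
  have pq: "\<And>i. p i \<in> carrier R" "\<And>i. q i \<in> carrier R" using p q unfolding up_def by auto
  have "((\<lambda>n. h (p n)) \<otimes>\<^bsub>UP S\<^esub> (\<lambda>n. h (q n))) n
      = (\<Oplus>\<^bsub>S\<^esub>i \<in> {..n}. g (p i \<otimes>\<^bsub>R\<^esub> q (n - i)))"
    using UP_simps(4)[OF up_comp[OF p h h_zero] up_comp[OF q h h_zero]] hg pq by simp
  also have "\<dots> = g ((p \<otimes>\<^bsub>UP R\<^esub> q) n)"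
    using finsum_additive[OF R S g g_add g_zero, of "{..n}" "\<lambda>i. p i \<otimes>\<^bsub>R\<^esub> q (n - i)"]
      pq UP_simps(4)[OF p q] by simp
  finally show "((\<lambda>n. h (p n)) \<otimes>\<^bsub>UP S\<^esub> (\<lambda>n. h (q n))) n = g ((p \<otimes>\<^bsub>UP R\<^esub> q) n)" .
qed

lemma armendariz_comp_coeff_mult_eq_zero:
  assumes R: "ring R" and S: "ring S"
    and h: "h \<in> carrier R \<rightarrow> carrier S" and h_zero: "h \<zero>\<^bsub>R\<^esub> = \<zero>\<^bsub>S\<^esub>"
    and g: "g \<in> carrier R \<rightarrow> carrier S"
    and g_add: "\<And>x y. x \<in> carrier R \<Longrightarrow> y \<in> carrier R \<Longrightarrow> g (x \<oplus>\<^bsub>R\<^esub> y) = g x \<oplus>\<^bsub>S\<^esub> g y"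
    and g_zero: "g \<zero>\<^bsub>R\<^esub> = \<zero>\<^bsub>S\<^esub>"
    and hg: "\<And>x y. x \<in> carrier R \<Longrightarrow> y \<in> carrier R \<Longrightarrow> h x \<otimes>\<^bsub>S\<^esub> h y = g (x \<otimes>\<^bsub>R\<^esub> y)"
    and "armendariz S"
    and p: "p \<in> carrier (UP R)" and q: "q \<in> carrier (UP R)"
    and pq: "p \<otimes>\<^bsub>UP R\<^esub> q = \<zero>\<^bsub>UP R\<^esub>"
  shows "h (p i) \<otimes>\<^bsub>S\<^esub> h (q j) = \<zero>\<^bsub>S\<^esub>"
proof -
  have p': "p \<in> up R" and q': "q \<in> up R" using p q by (simp_all add: UP_simps)
  have "(\<lambda>n. h (p n)) \<otimes>\<^bsub>UP S\<^esub> (\<lambda>n. h (q n)) = \<zero>\<^bsub>UP S\<^esub>"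
    using UP_mult_comp[OF R S h h_zero g g_add g_zero hg p' q'] pq g_zero by (simp add: UP_simps)
  then show ?thesis
    using \<open>armendariz S\<close> up_comp[OF p' h h_zero] up_comp[OF q' h h_zero]
    unfolding armendariz_def by (force simp: UP_simps)
qed

lemma armendariz_pullback:
  assumes R: "ring R" and S: "ring S"
    and h: "h \<in> carrier R \<rightarrow> carrier S" and h_zero: "h \<zero>\<^bsub>R\<^esub> = \<zero>\<^bsub>S\<^esub>"
    and g: "g \<in> carrier R \<rightarrow> carrier S"
    and g_add: "\<And>x y. x \<in> carrier R \<Longrightarrow> y \<in> carrier R \<Longrightarrow> g (x \<oplus>\<^bsub>R\<^esub> y) = g x \<oplus>\<^bsub>S\<^esub> g y"
    and g_zero: "g \<zero>\<^bsub>R\<^esub> = \<zero>\<^bsub>S\<^esub>"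
    and hg: "\<And>x y. x \<in> carrier R \<Longrightarrow> y \<in> carrier R \<Longrightarrow> h x \<otimes>\<^bsub>S\<^esub> h y = g (x \<otimes>\<^bsub>R\<^esub> y)"
    and g_inj: "inj_on g (carrier R)"
    and "armendariz S"
  shows "armendariz R"
  unfolding armendariz_def
proof (intro ballI impI allI)
  interpret R: ring R by fact
  fix p q i j
  assume p: "p \<in> carrier (UP R)" and q: "q \<in> carrier (UP R)"
    and pq: "p \<otimes>\<^bsub>UP R\<^esub> q = \<zero>\<^bsub>UP R\<^esub>"
  have pq_carrier: "p i \<in> carrier R" "q j \<in> carrier R"
    using p q unfolding UP_simps up_def by auto
  have "g (p i \<otimes>\<^bsub>R\<^esub> q j) = h (p i) \<otimes>\<^bsub>S\<^esub> h (q j)"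
    using hg pq_carrier by simp
  also have "\<dots> = g \<zero>\<^bsub>R\<^esub>"
    using armendariz_comp_coeff_mult_eq_zero[OF assms(1-8,10) p q pq] g_zero by simp
  finally have "p i \<otimes>\<^bsub>R\<^esub> q j = \<zero>\<^bsub>R\<^esub>"
    using g_inj pq_carrier by (simp add: inj_on_def)
  then show "coeff (UP R) p i \<otimes>\<^bsub>R\<^esub> coeff (UP R) q j = \<zero>\<^bsub>R\<^esub>"
    using p q by (simp add: UP_simps)
qed

lemma armendariz_ring_hom_coeff_mult_eq_zero:
  assumes "ring R" and "ring S" and h: "h \<in> ring_hom R S" and "armendariz S"
    and "p \<in> carrier (UP R)" and "q \<in> carrier (UP R)" and "p \<otimes>\<^bsub>UP R\<^esub> q = \<zero>\<^bsub>UP R\<^esub>"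
  shows "h (p i) \<otimes>\<^bsub>S\<^esub> h (q j) = \<zero>\<^bsub>S\<^esub>"
  using assms(1,2) ring_hom_closed[OF h] ring_hom_zero[OF h assms(1,2)]
    ring_hom_add[OF h] ring_hom_mult[OF h] assms(4-)
  by (intro armendariz_comp_coeff_mult_eq_zero[where g = h]) auto

lemma armendariz_subdirect_product:
  assumes R: "ring R" and "ring S" and "ring T"
    and h: "h \<in> ring_hom R S" and k: "k \<in> ring_hom R T"
    and "armendariz S" and "armendariz T"
    and ker: "\<And>x. x \<in> carrier R \<Longrightarrow> h x = \<zero>\<^bsub>S\<^esub> \<Longrightarrow> k x = \<zero>\<^bsub>T\<^esub> \<Longrightarrow> x = \<zero>\<^bsub>R\<^esub>"
  shows "armendariz R"
  unfolding armendariz_def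
proof (intro ballI impI allI)
  interpret R: ring R by fact
  fix p q i j
  assume p: "p \<in> carrier (UP R)" and q: "q \<in> carrier (UP R)"
    and pq: "p \<otimes>\<^bsub>UP R\<^esub> q = \<zero>\<^bsub>UP R\<^esub>"
  have pq_carrier: "p i \<in> carrier R" "q j \<in> carrier R"
    using p q unfolding UP_simps up_def by auto
  have "h (p i \<otimes>\<^bsub>R\<^esub> q j) = \<zero>\<^bsub>S\<^esub>"
    using armendariz_ring_hom_coeff_mult_eq_zero[OF R \<open>ring S\<close> h \<open>armendariz S\<close> p q pq]
      ring_hom_mult[OF h pq_carrier] by simp
  moreover have "k (p i \<otimes>\<^bsub>R\<^esub> q j) = \<zero>\<^bsub>T\<^esub>"
    using armendariz_ring_hom_coeff_mult_eq_zero[OF R \<open>ring T\<close> k \<open>armendariz T\<close> p q pq]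
      ring_hom_mult[OF k pq_carrier] by simp
  ultimately have "p i \<otimes>\<^bsub>R\<^esub> q j = \<zero>\<^bsub>R\<^esub>"
    using ker pq_carrier by simp
  then show "coeff (UP R) p i \<otimes>\<^bsub>R\<^esub> coeff (UP R) q j = \<zero>\<^bsub>R\<^esub>"
    using p q by (simp add: UP_simps)
qed

lemma armendariz_inj_ring_hom:
  assumes "ring R" and "ring S" and h: "h \<in> ring_hom R S" and "inj_on h (carrier R)"
    and "armendariz S"
  shows "armendariz R"
  using assms ring_hom_closed[OF h] ring_hom_zero[OF h assms(1,2)]
    ring_hom_add[OF h] ring_hom_mult[OF h]
  by (intro armendariz_pullback[where h = h and g = h]) auto

lemma regular_central_cancel:
  assumes "ring B" and s: "s \<in> regular_central B"
    and x: "x \<in> carrier B" and y: "y \<in> carrier B" and eq: "s \<otimes>\<^bsub>B\<^esub> x = s \<otimes>\<^bsub>B\<^esub> y"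
  shows "x = y"
proof -
  interpret B: ring B by fact
  have s_carrier: "s \<in> carrier B"
    and s_regular: "\<And>z. z \<in> carrier B \<Longrightarrow> s \<otimes>\<^bsub>B\<^esub> z = \<zero>\<^bsub>B\<^esub> \<Longrightarrow> z = \<zero>\<^bsub>B\<^esub>"
    using s unfolding regular_central_def by blast+
  have "s \<otimes>\<^bsub>B\<^esub> (x \<ominus>\<^bsub>B\<^esub> y) = \<zero>\<^bsub>B\<^esub>"
    using s_carrier x y eq by (simp add: B.minus_eq B.r_distr B.r_minus B.r_neg)
  then have "x \<ominus>\<^bsub>B\<^esub> y = \<zero>\<^bsub>B\<^esub>"
    using s_regular x y by simp
  then show ?thesis using x y by simp
qed

lemma regular_central_mult_mult:
  assumes "ring B" and s: "s \<in> regular_central B" and x: "x \<in> carrier B" and y: "y \<in> carrier B"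
  shows "(s \<otimes>\<^bsub>B\<^esub> x) \<otimes>\<^bsub>B\<^esub> (s \<otimes>\<^bsub>B\<^esub> y) = s \<otimes>\<^bsub>B\<^esub> (s \<otimes>\<^bsub>B\<^esub> (x \<otimes>\<^bsub>B\<^esub> y))"
proof -
  interpret B: ring B by fact
  have s_carrier: "s \<in> carrier B" and s_comm: "s \<otimes>\<^bsub>B\<^esub> x = x \<otimes>\<^bsub>B\<^esub> s"
    using s x unfolding regular_central_def by blast+
  have "(s \<otimes>\<^bsub>B\<^esub> x) \<otimes>\<^bsub>B\<^esub> (s \<otimes>\<^bsub>B\<^esub> y) = s \<otimes>\<^bsub>B\<^esub> ((x \<otimes>\<^bsub>B\<^esub> s) \<otimes>\<^bsub>B\<^esub> y)"
    using x y s_carrier by (simp add: B.m_assoc)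
  also have "\<dots> = s \<otimes>\<^bsub>B\<^esub> ((s \<otimes>\<^bsub>B\<^esub> x) \<otimes>\<^bsub>B\<^esub> y)"
    using s_comm by simp
  also have "\<dots> = s \<otimes>\<^bsub>B\<^esub> (s \<otimes>\<^bsub>B\<^esub> (x \<otimes>\<^bsub>B\<^esub> y))"
    using x y s_carrier by (simp add: B.m_assoc)
  finally show ?thesis .
qed

lemma armendariz_image_plus_ideal_if_amalgamation:
  assumes A: "ring A" and B: "ring B" and f: "f \<in> ring_hom A B" and J: "ideal J B"
    and s: "s \<in> J" "s \<in> regular_central B"
    and "armendariz (amalgamation A B f J)"
  shows "armendariz (image_plus_ideal A B f J)"
proof -
  interpret A: ring A by fact
  interpret B: ring B by fact
  interpret J: ideal J B by fact
  let ?C = "amalgamation A B f J" and ?D = "image_plus_ideal A B f J"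
  have s_carrier: "s \<in> carrier B" using s(1) J.Icarr by blast
  have D_carrier: "x \<in> carrier B" if "x \<in> carrier ?D" for x
    using that J.Icarr ring_hom_closed[OF f] by (auto simp: image_plus_ideal_simps)
  have J_in_C: "(\<zero>\<^bsub>A\<^esub>, j) \<in> carrier ?C" if "j \<in> J" for j
  proof -
    have "j = f \<zero>\<^bsub>A\<^esub> \<oplus>\<^bsub>B\<^esub> j"
      using that J.Icarr ring_hom_zero[OF f A B] by simp
    then show ?thesis using that by (auto simp: amalgamation_simps)
  qed
  have sJ: "s \<otimes>\<^bsub>B\<^esub> x \<in> J" if "x \<in> carrier ?D" for x
    using J.I_r_closed[OF s(1) D_carrier[OF that]] .
  show ?thesis
  proof (rule armendariz_pullback[OF ring_image_plus_ideal[OF A B f J] ring_amalgamation[OF A B f J],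
        where h = "\<lambda>x. (\<zero>\<^bsub>A\<^esub>, s \<otimes>\<^bsub>B\<^esub> x)" and g = "\<lambda>x. (\<zero>\<^bsub>A\<^esub>, s \<otimes>\<^bsub>B\<^esub> (s \<otimes>\<^bsub>B\<^esub> x))"])
    show "(\<lambda>x. (\<zero>\<^bsub>A\<^esub>, s \<otimes>\<^bsub>B\<^esub> x)) \<in> carrier ?D \<rightarrow> carrier ?C"
      using J_in_C sJ by auto
    show "(\<lambda>x. (\<zero>\<^bsub>A\<^esub>, s \<otimes>\<^bsub>B\<^esub> (s \<otimes>\<^bsub>B\<^esub> x))) \<in> carrier ?D \<rightarrow> carrier ?C"
      using J_in_C J.I_r_closed[OF s(1)] D_carrier s_carrier by (simp add: Pi_iff)
    show "(\<zero>\<^bsub>A\<^esub>, s \<otimes>\<^bsub>B\<^esub> \<zero>\<^bsub>?D\<^esub>) = \<zero>\<^bsub>?C\<^esub>"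
      and "(\<zero>\<^bsub>A\<^esub>, s \<otimes>\<^bsub>B\<^esub> (s \<otimes>\<^bsub>B\<^esub> \<zero>\<^bsub>?D\<^esub>)) = \<zero>\<^bsub>?C\<^esub>"
      using s_carrier by (simp_all add: amalgamation_simps image_plus_ideal_simps)
    show "(\<zero>\<^bsub>A\<^esub>, s \<otimes>\<^bsub>B\<^esub> (s \<otimes>\<^bsub>B\<^esub> (x \<oplus>\<^bsub>?D\<^esub> y))) =
          (\<zero>\<^bsub>A\<^esub>, s \<otimes>\<^bsub>B\<^esub> (s \<otimes>\<^bsub>B\<^esub> x)) \<oplus>\<^bsub>?C\<^esub> (\<zero>\<^bsub>A\<^esub>, s \<otimes>\<^bsub>B\<^esub> (s \<otimes>\<^bsub>B\<^esub> y))"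
      if "x \<in> carrier ?D" "y \<in> carrier ?D" for x y
      using that D_carrier s_carrier by (simp add: amalgamation_simps image_plus_ideal_simps B.r_distr)
    show "(\<zero>\<^bsub>A\<^esub>, s \<otimes>\<^bsub>B\<^esub> x) \<otimes>\<^bsub>?C\<^esub> (\<zero>\<^bsub>A\<^esub>, s \<otimes>\<^bsub>B\<^esub> y) =
          (\<zero>\<^bsub>A\<^esub>, s \<otimes>\<^bsub>B\<^esub> (s \<otimes>\<^bsub>B\<^esub> (x \<otimes>\<^bsub>?D\<^esub> y)))"
      if "x \<in> carrier ?D" "y \<in> carrier ?D" for x y
      using regular_central_mult_mult[OF B s(2) D_carrier[OF that(1)] D_carrier[OF that(2)]]
      by (simp add: amalgamation_simps image_plus_ideal_simps)
    show "inj_on (\<lambda>x. (\<zero>\<^bsub>A\<^esub>, s \<otimes>\<^bsub>B\<^esub> (s \<otimes>\<^bsub>B\<^esub> x))) (carrier ?D)"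
    proof (rule inj_onI)
      fix x y assume "x \<in> carrier ?D" "y \<in> carrier ?D"
        and "(\<zero>\<^bsub>A\<^esub>, s \<otimes>\<^bsub>B\<^esub> (s \<otimes>\<^bsub>B\<^esub> x)) = (\<zero>\<^bsub>A\<^esub>, s \<otimes>\<^bsub>B\<^esub> (s \<otimes>\<^bsub>B\<^esub> y))"
      then show "x = y"
        using regular_central_cancel[OF B s(2)] D_carrier s_carrier by (meson B.m_closed prod.inject)
    qed
  qed fact
qed

theorem theorem2p2:
  fixes A :: "('a, 'm) ring_scheme" and B :: "('b, 'n) ring_scheme"
    and f :: "'a \<Rightarrow> 'b" and J :: "'b set"
  assumes "ring A" and "ring B"
    and "f \<in> ring_hom A B"
    and "ideal J B" and "J \<noteq> carrier B"
    and "J \<inter> regular_central B \<noteq> {}"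
  shows "armendariz (amalgamation A B f J) \<longleftrightarrow>
           armendariz A \<and> armendariz (image_plus_ideal A B f J)"
proof
  assume C: "armendariz (amalgamation A B f J)"
  obtain s where "s \<in> J" "s \<in> regular_central B" using assms(6) by blast
  then have "armendariz (image_plus_ideal A B f J)"
    using armendariz_image_plus_ideal_if_amalgamation[OF assms(1-4) _ _ C] by blast
  moreover have "armendariz A"
    using armendariz_inj_ring_hom[OF assms(1) ring_amalgamation[OF assms(1-4)]
        amalgamation_graph_hom[OF assms(2-4)] _ C]
    by (simp add: inj_on_def)
  ultimately show "armendariz A \<and> armendariz (image_plus_ideal A B f J)" by blast
next
  assume "armendariz A \<and> armendariz (image_plus_ideal A B f J)"
  moreover have "x = \<zero>\<^bsub>amalgamation A B f J\<^esub>"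
    if "fst x = \<zero>\<^bsub>A\<^esub>" "snd x = \<zero>\<^bsub>image_plus_ideal A B f J\<^esub>" for x
    using that by (simp add: amalgamation_simps image_plus_ideal_simps prod_eq_iff)
  ultimately show "armendariz (amalgamation A B f J)"
    by (intro armendariz_subdirect_product[OF ring_amalgamation[OF assms(1-4)] assms(1)
        ring_image_plus_ideal[OF assms(1-4)] amalgamation_fst_hom amalgamation_snd_hom]) auto
qed

end
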